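(* Let $(P_n)_{n\ge 0}$ be the Padovan sequence and for $1\le b\le 4$ and $m\ge 0$ let $r_m^{(4,b)}=\sum_{k=0}^{m}P_{4k+b}$. Then for every $m\ge 3$, $$r_m^{(4,b)}=2r_{m-1}^{(4,b)}+3r_{m-2}^{(4,b)}+r_{m-3}^{(4,b)}+c_b,$$ where $c_1=2$, $c_2=4$, $c_3=3$, $c_4=6$.
   Context: The Padovan sequence is defined by $P_0=P_1=P_2=1$ and $P_{n+3}=P_{n+1}+P_n$. *)

theory Defs
  imports Main
begin

fun padovan :: "nat \<Rightarrow> nat" where
  "padovan 0 = 1"
| "padovan (Suc 0) = 1"
| "padovan (Suc (Suc 0)) = 1"
| "padovan (Suc (Suc (Suc n))) = padovan (Suc n) + padovan n"

definition r4 :: "nat \<Rightarrow> nat \<Rightarrow> nat" where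
  "r4 b m = (\<Sum>k = 0..m. padovan (4 * k + b))"

definition c4 :: "nat \<Rightarrow> nat" where
  "c4 b = (if b = 1 then 2 else if b = 2 then 4 else if b = 3 then 3 else 6)"

end

theory Submission
  imports Defs
begin

text \<open>Since \<open>x\<^sup>1\<^sup>2 - 2x\<^sup>8 - 3x\<^sup>4 - 1\<close> is divisible by the Padovan polynomial \<open>x\<^sup>3 - x - 1\<close>,
  every subsequence \<open>k \<mapsto> P\<^bsub>4k+b\<^esub>\<close> obeys the recurrence with coefficients 2, 3, 1.
  Partial sums of a sequence obeying this recurrence obey it up to an additive constant,
  and the constant is the value of the defect at \<open>m = 3\<close>, computed from the first terms.\<close>

lemma padovan_add_3: "padovan (n + 3) = padovan (n + 1) + padovan n"
  by (simp add: numeral_eq_Suc)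

lemma padovan_recurrence_step_4:
  fixes f :: "nat \<Rightarrow> 'a :: comm_semiring_1"
  assumes rec: "\<And>n. f (n + 3) = f (n + 1) + f n"
  shows "f (n + 12) = 2 * f (n + 8) + 3 * f (n + 4) + f n"
proof -
  have rec_Suc: "\<And>k. f (Suc (Suc (Suc k))) = f (Suc k) + f k"
    using rec by (simp add: numeral_eq_Suc)
  \<comment> \<open>rewrite every term down to \<open>f n\<close>, \<open>f (n + 1)\<close>, \<open>f (n + 2)\<close> and compare coefficients\<close>
  show ?thesis
    by (simp only: numeral_eq_Suc pred_numeral_simps BitM.simps add_Suc_right add_0_right rec_Suc)
      (simp only: numeral_Bit0 numeral_Bit1 numeral_One distrib_right mult_1_left add_ac)
qed

lemma partial_sums_recurrence_2_3_1:
  fixes g :: "nat \<Rightarrow> 'a :: comm_semiring_1"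
  assumes rec: "\<And>k. g (k + 3) = 2 * g (k + 2) + 3 * g (k + 1) + g k"
  defines "S m \<equiv> \<Sum>k = 0..m. g k"
  shows "S (n + 3) + (2 * S 2 + 3 * S 1 + S 0) = 2 * S (n + 2) + 3 * S (n + 1) + S n + S 3"
proof (induction n)
  case 0
  show ?case by (simp only: add_0) (rule add.commute)
next
  case (Suc n)
  have S_Suc: "\<And>m. S (Suc m) = S m + g (Suc m)"
    by (simp add: S_def)
  have g_4: "g (n + 4) = 2 * g (n + 3) + 3 * g (n + 2) + g (n + 1)"
    using rec[of "n + 1"] by (simp add: numeral_eq_Suc)
  have "S (Suc n + 3) + (2 * S 2 + 3 * S 1 + S 0)
      = (S (n + 3) + (2 * S 2 + 3 * S 1 + S 0)) + g (n + 4)"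
    using S_Suc[of "n + 3"] by (simp add: algebra_simps)
  also have "\<dots> = 2 * S (n + 2) + 3 * S (n + 1) + S n + S 3
      + (2 * g (n + 3) + 3 * g (n + 2) + g (n + 1))"
    by (simp only: Suc.IH g_4)
  also have "\<dots> = 2 * S (Suc n + 2) + 3 * S (Suc n + 1) + S (Suc n) + S 3"
    by (simp add: S_Suc numeral_eq_Suc algebra_simps)
  finally show ?case .
qed

lemma r4_3:
  assumes "1 \<le> b" and "b \<le> 4"
  shows "r4 b 3 = 2 * r4 b 2 + 3 * r4 b 1 + r4 b 0 + c4 b"
proof -
  from assms consider "b = 1" | "b = 2" | "b = 3" | "b = 4" by linarith
  then show ?thesis
    by cases (simp_all add: r4_def c4_def numeral_eq_Suc)
qed

theorem theorem4p4:
  fixes b m :: nat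
  assumes "1 \<le> b" and "b \<le> 4" and "3 \<le> m"
  shows "r4 b m = 2 * r4 b (m - 1) + 3 * r4 b (m - 2) + r4 b (m - 3) + c4 b"
proof -
  obtain n where m: "m = n + 3"
    using assms(3) by (metis add.commute le_Suc_ex)
  have "padovan (4 * (k + 3) + b)
      = 2 * padovan (4 * (k + 2) + b) + 3 * padovan (4 * (k + 1) + b) + padovan (4 * k + b)" for k
    using padovan_recurrence_step_4[OF padovan_add_3, of "4 * k + b"] by (simp add: algebra_simps)
  then have "r4 b (n + 3) + (2 * r4 b 2 + 3 * r4 b 1 + r4 b 0)
      = 2 * r4 b (n + 2) + 3 * r4 b (n + 1) + r4 b n + r4 b 3"
    unfolding r4_def by (rule partial_sums_recurrence_2_3_1)
  then show ?thesis
    using r4_3[OF assms(1,2)] by (simp add: m)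
qed

end
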